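(* Let $C=(C_{i,j})$ be an $m\times n$ evolutionary stable (ES) configuration. Then there are no indices $i,j$ (with all positions below lying in the grid) such that either (Type III) $C_{i-1,j-1}=C_{i,j}=C_{i+1,j+1}=0$ and $C_{i+2,l}=1$ for all $l$ with $j+1\le l\le n$; or (Type IV) $C_{i-1,j-1}=C_{i,j}=C_{i+1,j+1}=0$ and, for all $l$ with $j+1\le l\le n$, $C_{i+1,l}=0$ if $l-(j+1)\equiv 0 \pmod 3$ and $C_{i+1,l}=1$ otherwise. The same holds for the mirror images of these two constellations under the reflection $j\mapsto n+1-j$ of columns (with the row patterns then extending to the left border).
   Context: An $m\times n$ configuration is a $0$-$1$ matrix $C=(C_{i,j})$, $1\le i\le m$, $1\le j\le n$; $C_{i,j}=1$ means lot $(i,j)$ is occupied by a house. Row $1$ is the northernmost, row $m$ the southernmost; column $1$ westernmost, column $n$ easternmost. A house at $(i,j)$ is blocked from sunlight if the three lots $(i,j-1)$, $(i,j+1)$, $(i+1,j)$ all lie inside the grid and are all occupied (lots outside the grid never obstruct sunlight). $C$ is permissible if no house is blocked, and maximal if it is permissible and setting any single empty lot to $1$ yields a non-permissible configuration. A maximal configuration is resistant to predators if, for every empty lot, putting a house on it results in that new house being blocked; it is resistant to altruists if, for every empty lot, putting a house on it results in some other (already existing) house being blocked. An ES configuration is a maximal configuration resistant to both predators and altruists. *)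

theory Defs
  imports Main
begin

text \<open>An m x n configuration is a function C :: nat => nat => bool; C i j = True means
  lot (i,j) is occupied.  Only the values for 1 <= i <= m, 1 <= j <= n matter.\<close>

definition inside :: "nat \<Rightarrow> nat \<Rightarrow> nat \<Rightarrow> nat \<Rightarrow> bool" where
  "inside m n i j \<longleftrightarrow> 1 \<le> i \<and> i \<le> m \<and> 1 \<le> j \<and> j \<le> n"

definition blocked :: "nat \<Rightarrow> nat \<Rightarrow> (nat \<Rightarrow> nat \<Rightarrow> bool) \<Rightarrow> nat \<Rightarrow> nat \<Rightarrow> bool" where
  "blocked m n C i j \<longleftrightarrow> inside m n i j \<and> C i j \<and>
     2 \<le> j \<and> j + 1 \<le> n \<and> i + 1 \<le> m \<and>
     C i (j - 1) \<and> C i (j + 1) \<and> C (i + 1) j"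

definition permissible :: "nat \<Rightarrow> nat \<Rightarrow> (nat \<Rightarrow> nat \<Rightarrow> bool) \<Rightarrow> bool" where
  "permissible m n C \<longleftrightarrow> (\<forall>i j. \<not> blocked m n C i j)"

definition place :: "(nat \<Rightarrow> nat \<Rightarrow> bool) \<Rightarrow> nat \<Rightarrow> nat \<Rightarrow> (nat \<Rightarrow> nat \<Rightarrow> bool)" where
  "place C i j = (\<lambda>a b. if a = i \<and> b = j then True else C a b)"

definition maximal :: "nat \<Rightarrow> nat \<Rightarrow> (nat \<Rightarrow> nat \<Rightarrow> bool) \<Rightarrow> bool" where
  "maximal m n C \<longleftrightarrow> permissible m n C \<and>
     (\<forall>i j. inside m n i j \<and> \<not> C i j \<longrightarrow> \<not> permissible m n (place C i j))"

definition resistant_predators :: "nat \<Rightarrow> nat \<Rightarrow> (nat \<Rightarrow> nat \<Rightarrow> bool) \<Rightarrow> bool" where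
  "resistant_predators m n C \<longleftrightarrow> maximal m n C \<and>
     (\<forall>i j. inside m n i j \<and> \<not> C i j \<longrightarrow> blocked m n (place C i j) i j)"

definition resistant_altruists :: "nat \<Rightarrow> nat \<Rightarrow> (nat \<Rightarrow> nat \<Rightarrow> bool) \<Rightarrow> bool" where
  "resistant_altruists m n C \<longleftrightarrow> maximal m n C \<and>
     (\<forall>i j. inside m n i j \<and> \<not> C i j \<longrightarrow>
        (\<exists>i' j'. (i', j') \<noteq> (i, j) \<and> inside m n i' j' \<and> C i' j' \<and>
                 blocked m n (place C i j) i' j'))"

definition ES :: "nat \<Rightarrow> nat \<Rightarrow> (nat \<Rightarrow> nat \<Rightarrow> bool) \<Rightarrow> bool" where
  "ES m n C \<longleftrightarrow> maximal m n C \<and> resistant_predators m n C \<and> resistant_altruists m n C"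

definition typeIII :: "nat \<Rightarrow> nat \<Rightarrow> (nat \<Rightarrow> nat \<Rightarrow> bool) \<Rightarrow> nat \<Rightarrow> nat \<Rightarrow> bool" where
  "typeIII m n C i j \<longleftrightarrow> 2 \<le> i \<and> i + 2 \<le> m \<and> 2 \<le> j \<and> j + 1 \<le> n \<and>
     \<not> C (i - 1) (j - 1) \<and> \<not> C i j \<and> \<not> C (i + 1) (j + 1) \<and>
     (\<forall>l. j + 1 \<le> l \<and> l \<le> n \<longrightarrow> C (i + 2) l)"

definition typeIV :: "nat \<Rightarrow> nat \<Rightarrow> (nat \<Rightarrow> nat \<Rightarrow> bool) \<Rightarrow> nat \<Rightarrow> nat \<Rightarrow> bool" where
  "typeIV m n C i j \<longleftrightarrow> 2 \<le> i \<and> i + 1 \<le> m \<and> 2 \<le> j \<and> j + 1 \<le> n \<and>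
     \<not> C (i - 1) (j - 1) \<and> \<not> C i j \<and> \<not> C (i + 1) (j + 1) \<and>
     (\<forall>l. j + 1 \<le> l \<and> l \<le> n \<longrightarrow>
        (C (i + 1) l \<longleftrightarrow> (l - (j + 1)) mod 3 \<noteq> 0))"

definition reflect :: "nat \<Rightarrow> (nat \<Rightarrow> nat \<Rightarrow> bool) \<Rightarrow> (nat \<Rightarrow> nat \<Rightarrow> bool)" where
  "reflect n C = (\<lambda>i j. C i (n + 1 - j))"

end

(*
  An ES configuration obeys three local rules (locale ES_local): every vacancy has occupied
  left, right and lower neighbours, no house is blocked, and a house put on a vacancy would
  block its left, right or upper neighbour.  The rules are invariant under the column
  reflection, which takes care of the mirrored constellations.

  The central object is a bracket: two vacancies in one row, at columns p + 1 and p + 3T + 3,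
  above a row that reads 0 1 1 0 1 1 ... 0 between them.  No bracket whose left end satisfies a
  mild side condition exists.  This goes by strong induction on T: the row carrying the two
  vacancies is forced into the same 0 1 1 pattern up to its first vacancy, and the gap there
  creates a shorter bracket one row higher, whose side condition holds at its right end, so the
  induction hypothesis applies to the mirror image.

  In a Type IV constellation the pattern cannot reach the right border without creating such a
  bracket.  In a Type III constellation the full row forces the 0 1 1 pattern into the row above
  it, which gives Type IV.
*)

theory Submission
  imports Defs
begin

locale ES_local =
  fixes m n :: nat and C :: "nat \<Rightarrow> nat \<Rightarrow> bool"
  assumes vacancy_surrounded: "\<lbrakk>1 \<le> a; a \<le> m; 1 \<le> c; c \<le> n; \<not> C a c\<rbrakk> \<Longrightarrow>
      2 \<le> c \<and> c + 1 \<le> n \<and> a + 1 \<le> m \<and> C a (c - 1) \<and> C a (c + 1) \<and> C (a + 1) c"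
    and not_blocked: "\<lbrakk>1 \<le> a; a + 1 \<le> m; 2 \<le> c; c + 1 \<le> n; C a (c - 1); C a c; C a (c + 1)\<rbrakk> \<Longrightarrow>
      \<not> C (a + 1) c"
    and vacancy_blocks_neighbour: "\<lbrakk>1 \<le> a; a \<le> m; 1 \<le> c; c \<le> n; \<not> C a c\<rbrakk> \<Longrightarrow>
      (3 \<le> c \<and> C a (c - 2) \<and> C (a + 1) (c - 1)) \<or>
      (c + 2 \<le> n \<and> C a (c + 2) \<and> C (a + 1) (c + 1)) \<or>
      (2 \<le> a \<and> C (a - 1) (c - 1) \<and> C (a - 1) c \<and> C (a - 1) (c + 1))"

lemma ES_vacancy_surrounded:
  assumes "ES m n C" "1 \<le> a" "a \<le> m" "1 \<le> c" "c \<le> n" "\<not> C a c"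
  shows "2 \<le> c \<and> c + 1 \<le> n \<and> a + 1 \<le> m \<and> C a (c - 1) \<and> C a (c + 1) \<and> C (a + 1) c"
proof -
  have "blocked m n (place C a c) a c"
    using assms by (auto simp: ES_def resistant_predators_def inside_def)
  then show ?thesis by (auto simp: blocked_def place_def)
qed

lemma ES_vacancy_blocks_neighbour:
  assumes "ES m n C" "1 \<le> a" "a \<le> m" "1 \<le> c" "c \<le> n" "\<not> C a c"
  shows "(3 \<le> c \<and> C a (c - 2) \<and> C (a + 1) (c - 1)) \<or>
      (c + 2 \<le> n \<and> C a (c + 2) \<and> C (a + 1) (c + 1)) \<or>
      (2 \<le> a \<and> C (a - 1) (c - 1) \<and> C (a - 1) c \<and> C (a - 1) (c + 1))"
proof -
  have permissible: "\<And>i j. \<not> blocked m n C i j"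
    using assms(1) by (auto simp: ES_def maximal_def permissible_def)
  obtain i j where "(i, j) \<noteq> (a, c)" "inside m n i j" "C i j"
    and blocked_after: "blocked m n (place C a c) i j"
    using assms unfolding ES_def resistant_altruists_def inside_def by blast
  then consider "a = i \<and> c = j - 1" | "a = i \<and> c = j + 1" | "a = i + 1 \<and> c = j"
    | "blocked m n C i j"
    by (auto simp: blocked_def place_def split: if_splits)
  then show ?thesis
    using blocked_after permissible \<open>inside m n i j\<close> \<open>C i j\<close>
    by cases (auto simp: blocked_def place_def inside_def)
qed

lemma ES_imp_ES_local:
  assumes "ES m n C" shows "ES_local m n C"
proof
  have "\<And>i j. \<not> blocked m n C i j"
    using assms by (auto simp: ES_def maximal_def permissible_def)
  then show "\<And>a c. \<lbrakk>1 \<le> a; a + 1 \<le> m; 2 \<le> c; c + 1 \<le> n; C a (c - 1); C a c; C a (c + 1)\<rbrakk> \<Longrightarrow>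
      \<not> C (a + 1) c"
    by (auto simp: blocked_def inside_def)
qed (fact ES_vacancy_surrounded[OF assms] ES_vacancy_blocks_neighbour[OF assms])+

lemma ES_local_reflect:
  assumes "ES_local m n C" shows "ES_local m n (reflect n C)"
proof -
  interpret ES_local m n C by fact
  show ?thesis
  proof
    fix a c assume "1 \<le> a" "a \<le> m" "1 \<le> c" "c \<le> n" "\<not> reflect n C a c"
    then have "1 \<le> n + 1 - c" "n + 1 - c \<le> n" "\<not> C a (n + 1 - c)"
      by (auto simp: reflect_def)
    note * = vacancy_surrounded[OF \<open>1 \<le> a\<close> \<open>a \<le> m\<close> this]
      vacancy_blocks_neighbour[OF \<open>1 \<le> a\<close> \<open>a \<le> m\<close> this]
    show "2 \<le> c \<and> c + 1 \<le> n \<and> a + 1 \<le> m \<and> reflect n C a (c - 1) \<and>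
        reflect n C a (c + 1) \<and> reflect n C (a + 1) c"
      using *(1) \<open>c \<le> n\<close> by (auto simp: reflect_def Suc_diff_le)
    show "(3 \<le> c \<and> reflect n C a (c - 2) \<and> reflect n C (a + 1) (c - 1)) \<or>
      (c + 2 \<le> n \<and> reflect n C a (c + 2) \<and> reflect n C (a + 1) (c + 1)) \<or>
      (2 \<le> a \<and> reflect n C (a - 1) (c - 1) \<and> reflect n C (a - 1) c \<and> reflect n C (a - 1) (c + 1))"
      using *(1,2) \<open>c \<le> n\<close> by (auto simp: reflect_def Suc_diff_le)
  next
    fix a c assume "1 \<le> a" "a + 1 \<le> m" "2 \<le> c" "c + 1 \<le> n"
      "reflect n C a (c - 1)" "reflect n C a c" "reflect n C a (c + 1)"
    then show "\<not> reflect n C (a + 1) c"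
      using not_blocked[of a "n + 1 - c"] by (auto simp: reflect_def Suc_diff_le)
  qed
qed

context ES_local
begin

lemma occupied_above_vacancy:
  "\<lbrakk>1 \<le> a; a + 1 \<le> m; 1 \<le> c; c \<le> n; \<not> C (a + 1) c\<rbrakk> \<Longrightarrow> C a c"
  using vacancy_surrounded[of a c] by fastforce

lemma occupied_last_column: "\<lbrakk>1 \<le> a; a \<le> m; 1 \<le> n\<rbrakk> \<Longrightarrow> C a n"
  using vacancy_surrounded[of a n] by fastforce

lemma vacant_below_triple:
  "\<lbrakk>1 \<le> a; a + 1 \<le> m; 1 \<le> d; d + 2 \<le> n; C a d; C a (d + 1); C a (d + 2)\<rbrakk> \<Longrightarrow>
    \<not> C (a + 1) (d + 1)"
  using not_blocked[of a "d + 1"] by simp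

lemma occupied_diagonal_forces_vacancy:
  assumes "1 \<le> b" "b + 1 \<le> m" "1 \<le> c" "c + 2 \<le> n" "\<not> C (b + 1) c" "C b (c + 1)"
  shows "\<not> C b (c + 2)"
proof -
  have "C b c" "C (b + 1) (c + 1)"
    using occupied_above_vacancy[of b c] vacancy_surrounded[of "b + 1" c] assms by simp_all
  then show ?thesis
    using vacant_below_triple[of b c] assms by auto
qed

lemma vacant_above_gap:
  assumes "1 \<le> b" "b + 1 \<le> m" "1 \<le> c" "c + 2 \<le> n" "\<not> C (b + 1) c" "\<not> C (b + 1) (c + 2)"
  shows "\<not> C b (c + 1)"
  using occupied_diagonal_forces_vacancy[of b c] occupied_above_vacancy[of b "c + 2"] assms by auto

lemma triple_two_above_gap:
  assumes "1 \<le> b" "b + 1 \<le> m" "1 \<le> c" "c + 2 \<le> n" "\<not> C (b + 1) c" "\<not> C (b + 1) (c + 2)"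
  shows "2 \<le> b \<and> C (b - 1) c \<and> C (b - 1) (c + 1) \<and> C (b - 1) (c + 2)"
  using vacancy_blocks_neighbour[of b "c + 1"] vacant_above_gap[OF assms] assms by simp

lemma vacancies_left_of_gap:
  assumes "1 \<le> b" "b + 1 \<le> m" "1 \<le> f" "f + 4 \<le> n" "\<not> C (b + 1) (f + 2)" "\<not> C (b + 1) (f + 4)"
  shows "\<not> C b f" "\<not> C (b - 1) (f + 1)"
proof -
  have gap: "\<not> C b (f + 3)" and roof: "2 \<le> b" "C (b - 1) (f + 2)" "C (b - 1) (f + 3)"
    using vacant_above_gap[of b "f + 2"] triple_two_above_gap[of b "f + 2"] assms
    by (simp_all add: numeral_eq_Suc)
  have "C b (f + 1)"
    using vacant_above_gap[of "b - 1" "f + 1"] gap roof assms by (fastforce simp: numeral_eq_Suc)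
  moreover have "C b (f + 2)" "C (b + 1) (f + 1)"
    using occupied_above_vacancy[of b "f + 2"] vacancy_surrounded[of "b + 1" "f + 2"] assms
    by simp_all
  ultimately show "\<not> C b f"
    using vacant_below_triple[of b f] assms by auto
  have "b - 1 + 1 = b" "1 \<le> b - 1"
    using roof by simp_all
  then show "\<not> C (b - 1) (f + 1)"
    using vacant_below_triple[of "b - 1" "f + 1"] \<open>C b (f + 2)\<close> roof assms
    by (auto simp: numeral_eq_Suc)
qed

end

definition pattern_011 :: "(nat \<Rightarrow> bool) \<Rightarrow> nat \<Rightarrow> nat \<Rightarrow> bool" where
  "pattern_011 f lo hi \<longleftrightarrow> (\<forall>x. lo \<le> x \<longrightarrow> x \<le> hi \<longrightarrow> (f x \<longleftrightarrow> (x - lo) mod 3 \<noteq> 0))"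

lemma pattern_011_vacant: "\<lbrakk>pattern_011 f lo hi; x = lo + 3 * s; x \<le> hi\<rbrakk> \<Longrightarrow> \<not> f x"
  unfolding pattern_011_def by simp

lemma pattern_011_occupied:
  "\<lbrakk>pattern_011 f lo hi; x = lo + 3 * s + 1 \<or> x = lo + 3 * s + 2; x \<le> hi\<rbrakk> \<Longrightarrow> f x"
  unfolding pattern_011_def by (auto simp: mod_Suc)

lemma pattern_011I:
  assumes "\<And>s. lo + 3 * s \<le> hi \<Longrightarrow> \<not> f (lo + 3 * s)"
    and "\<And>s. lo + 3 * s + 1 \<le> hi \<Longrightarrow> f (lo + 3 * s + 1)"
    and "\<And>s. lo + 3 * s + 2 \<le> hi \<Longrightarrow> f (lo + 3 * s + 2)"
  shows "pattern_011 f lo hi"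
  unfolding pattern_011_def
proof (intro allI impI)
  fix x assume "lo \<le> x" "x \<le> hi"
  define s r where "s = (x - lo) div 3" and "r = (x - lo) mod 3"
  then have x: "x = lo + 3 * s + r" and "r < 3"
    using \<open>lo \<le> x\<close> by simp_all
  then consider "r = 0" | "r = 1" | "r = 2" by linarith
  then show "f x \<longleftrightarrow> (x - lo) mod 3 \<noteq> 0"
    using assms[of s] \<open>x \<le> hi\<close> by cases (simp_all add: x mod_Suc)
qed

lemma pattern_011_snoc:
  "\<lbrakk>pattern_011 f lo hi; f (hi + 1) \<longleftrightarrow> (hi + 1 - lo) mod 3 \<noteq> 0\<rbrakk> \<Longrightarrow> pattern_011 f lo (hi + 1)"
  unfolding pattern_011_def by (auto simp: le_Suc_eq)

lemma pattern_011_restrict: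
  assumes "pattern_011 f lo hi" "hi' \<le> hi"
  shows "pattern_011 f (lo + 3 * k) hi'"
  unfolding pattern_011_def
proof (intro allI impI)
  fix x assume x: "lo + 3 * k \<le> x" "x \<le> hi'"
  then have "f x \<longleftrightarrow> (x - lo) mod 3 \<noteq> 0"
    using assms unfolding pattern_011_def by simp
  moreover have "x - lo = (x - (lo + 3 * k)) + 3 * k"
    using x by simp
  ultimately show "f x \<longleftrightarrow> (x - (lo + 3 * k)) mod 3 \<noteq> 0"
    by simp
qed

lemma mod_3_eq_0_iff_complement: "(u::nat) + v = 3 * k \<Longrightarrow> u mod 3 = 0 \<longleftrightarrow> v mod 3 = 0"
  by presburger

lemma pattern_011_reflect:
  assumes "pattern_011 f lo (lo + 3 * k)" "1 \<le> lo" "lo + 3 * k \<le> n"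
  shows "pattern_011 (\<lambda>x. f (n + 1 - x)) (n + 1 - (lo + 3 * k)) (n + 1 - lo)"
  unfolding pattern_011_def
proof (intro allI impI)
  fix x assume x: "n + 1 - (lo + 3 * k) \<le> x" "x \<le> n + 1 - lo"
  then have "lo \<le> n + 1 - x" "n + 1 - x \<le> lo + 3 * k"
    using assms by linarith+
  then have "f (n + 1 - x) \<longleftrightarrow> (n + 1 - x - lo) mod 3 \<noteq> 0"
    using assms(1) unfolding pattern_011_def by blast
  moreover have "(x - (n + 1 - (lo + 3 * k))) mod 3 = 0 \<longleftrightarrow> (n + 1 - x - lo) mod 3 = 0"
    by (rule mod_3_eq_0_iff_complement[where k = k]) (use x assms in linarith)
  ultimately show "f (n + 1 - x) \<longleftrightarrow> (x - (n + 1 - (lo + 3 * k))) mod 3 \<noteq> 0"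
    by simp
qed

definition bracket :: "nat \<Rightarrow> nat \<Rightarrow> (nat \<Rightarrow> nat \<Rightarrow> bool) \<Rightarrow> nat \<Rightarrow> nat \<Rightarrow> nat \<Rightarrow> bool" where
  "bracket m n C b p T \<longleftrightarrow> 1 \<le> b \<and> b + 1 \<le> m \<and> 1 \<le> p \<and> p + 3 * T + 3 \<le> n \<and>
     \<not> C (b + 1) (p + 1) \<and> \<not> C (b + 1) (p + 3 * T + 3) \<and>
     pattern_011 (C (b + 2)) (p + 2) (p + 3 * T + 2)"

lemma bracket_reflect:
  assumes "ES_local m n C" "bracket m n C b p T"
  obtains q where "bracket m n (reflect n C) b q T"
    and "reflect n C b q \<longleftrightarrow> C b (p + 3 * T + 4)"
    and "reflect n C b (q + 2) \<longleftrightarrow> C b (p + 3 * T + 2)"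
proof -
  interpret ES_local m n C by fact
  have br: "1 \<le> b" "b + 1 \<le> m" "1 \<le> p" "p + 3 * T + 3 \<le> n" "\<not> C (b + 1) (p + 1)"
    "\<not> C (b + 1) (p + 3 * T + 3)"
    and pat: "pattern_011 (C (b + 2)) (p + 2) (p + 2 + 3 * T)"
    using assms(2) by (simp_all add: bracket_def add.commute add.left_commute)
  have "p + 3 * T + 4 \<le> n"
    using vacancy_surrounded[of "b + 1" "p + 3 * T + 3"] br by simp
  define q where "q = n - (p + 3 * T + 3)"
  have q: "n + 1 - (p + 2 + 3 * T) = q + 2" "n + 1 - (p + 2) = q + 3 * T + 2"
    "n + 1 - (q + 1) = p + 3 * T + 3" "n + 1 - (q + 3 * T + 3) = p + 1"
    "n + 1 - q = p + 3 * T + 4" "n + 1 - (q + 2) = p + 3 * T + 2"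
    "1 \<le> q" "q + 3 * T + 3 \<le> n"
    using \<open>p + 3 * T + 4 \<le> n\<close> unfolding q_def by simp_all
  have "pattern_011 (\<lambda>x. C (b + 2) (n + 1 - x)) (n + 1 - (p + 2 + 3 * T)) (n + 1 - (p + 2))"
    using \<open>p + 3 * T + 4 \<le> n\<close> by (intro pattern_011_reflect[OF pat]) simp_all
  then have "pattern_011 (reflect n C (b + 2)) (q + 2) (q + 3 * T + 2)"
    unfolding q reflect_def .
  moreover have "\<not> reflect n C (b + 1) (q + 1)" "\<not> reflect n C (b + 1) (q + 3 * T + 3)"
    unfolding reflect_def q(3,4) using br(5,6) by simp_all
  ultimately have "bracket m n (reflect n C) b q T"
    using br(1,2) q(7,8) unfolding bracket_def by blast
  moreover have "reflect n C b q \<longleftrightarrow> C b (p + 3 * T + 4)"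
    and "reflect n C b (q + 2) \<longleftrightarrow> C b (p + 3 * T + 2)"
    unfolding reflect_def q(5,6) by simp_all
  ultimately show thesis
    by (rule that)
qed

context ES_local
begin

lemma pattern_011_propagates_up:
  assumes "1 \<le> b" "b + 2 \<le> m" "1 \<le> p" "p + 3 * t + 2 \<le> n" "\<not> C (b + 1) (p + 1)"
    and below: "pattern_011 (C (b + 2)) (p + 2) (p + 3 * t + 2)"
    and occupied: "\<And>s. s < t \<Longrightarrow> C (b + 1) (p + 3 * s + 3)"
  shows "pattern_011 (C (b + 1)) (p + 1) (p + 3 * t + 2)"
proof (rule pattern_011I)
  have above_vacancy: "C (b + 1) (p + 3 * s + 2)" if "s \<le> t" for s
    using occupied_above_vacancy[of "b + 1" "p + 3 * s + 2"]
      pattern_011_vacant[OF below, of "p + 3 * s + 2" s] that assms by simp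
  fix s
  show "\<not> C (b + 1) (p + 1 + 3 * s)" if "p + 1 + 3 * s \<le> p + 3 * t + 2"
  proof (cases s)
    case (Suc r)
    have "r < t"
      using Suc that by simp
    have "C (b + 2) (p + 3 * r + 3)"
      using pattern_011_occupied[OF below, of "p + 3 * r + 3" r] Suc that by simp
    then have "\<not> C (b + 1) (p + 3 * r + 4)"
      using vacant_below_triple[of "b + 1" "p + 3 * r + 2"] above_vacancy[of r] occupied[OF \<open>r < t\<close>]
        \<open>r < t\<close> assms by (auto simp: numeral_eq_Suc)
    moreover have "p + 1 + 3 * s = p + 3 * r + 4"
      using Suc by simp
    ultimately show ?thesis
      by metis
  qed (use assms in simp)
  show "p + 1 + 3 * s + 1 \<le> p + 3 * t + 2 \<Longrightarrow> C (b + 1) (p + 1 + 3 * s + 1)"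
    and "p + 1 + 3 * s + 2 \<le> p + 3 * t + 2 \<Longrightarrow> C (b + 1) (p + 1 + 3 * s + 2)"
    using above_vacancy[of s] occupied[of s] by (simp_all add: numeral_eq_Suc)
qed

lemma bracket_row_above:
  assumes "bracket m n C b p T"
  obtains t where "t \<le> T" "pattern_011 (C (b + 1)) (p + 1) (p + 3 * t + 2)"
    "\<not> C (b + 1) (p + 3 * t + 3)"
proof -
  have hb: "1 \<le> b" "b + 1 \<le> m" "1 \<le> p" "p + 3 * T + 3 \<le> n"
    and ends: "\<not> C (b + 1) (p + 1)" "\<not> C (b + 1) (p + 3 * T + 3)"
    and below: "pattern_011 (C (b + 2)) (p + 2) (p + 3 * T + 2)"
    using assms unfolding bracket_def by auto
  have "b + 2 \<le> m"
    using vacancy_surrounded[of "b + 1" "p + 1"] hb ends by simp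
  define t where "t = (LEAST t. \<not> C (b + 1) (p + 3 * t + 3))"
  have t: "\<not> C (b + 1) (p + 3 * t + 3)" "t \<le> T"
    unfolding t_def using ends(2) by (fact LeastI, fact Least_le)
  have "C (b + 1) (p + 3 * s + 3)" if "s < t" for s
    using not_less_Least[OF that[unfolded t_def]] by simp
  then have "pattern_011 (C (b + 1)) (p + 1) (p + 3 * t + 2)"
    using pattern_011_restrict[OF below, of "p + 3 * t + 2" 0] hb ends t \<open>b + 2 \<le> m\<close>
    by (intro pattern_011_propagates_up) auto
  with t show thesis
    using that by blast
qed

lemma bracket_gap_above:
  assumes "bracket m n C b p T" and guard: "\<not> C b p \<or> C b (p + 2)"
  obtains u where "u < T" "2 \<le> b" "pattern_011 (C (b + 1)) (p + 1) (p + 3 * u + 1)"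
    "\<not> C b (p + 3 * u + 2)" "\<not> C (b - 1) (p + 3 * u + 3)"
proof -
  have hb: "1 \<le> b" "b + 1 \<le> m" "1 \<le> p" "p + 3 * T + 3 \<le> n"
    using assms unfolding bracket_def by auto
  obtain t where t: "t \<le> T" "\<not> C (b + 1) (p + 3 * t + 3)"
    and row: "pattern_011 (C (b + 1)) (p + 1) (p + 3 * t + 2)"
    using bracket_row_above[OF assms(1)] by blast
  have vacant_end: "\<not> C (b + 1) (p + 3 * t + 1)"
    using row by (rule pattern_011_vacant[where s = t]) simp_all
  then have gap: "\<not> C b (p + 3 * t + 2)" "2 \<le> b" "C (b - 1) (p + 3 * t + 1)"
    using vacant_above_gap[of b "p + 3 * t + 1"] triple_two_above_gap[of b "p + 3 * t + 1"] hb t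
    by (simp_all add: numeral_eq_Suc)
  obtain u where u: "t = Suc u"
  proof (cases t)
    case 0
    have "b - 1 + 1 = b" "1 \<le> b - 1"
      using gap(2) by simp_all
    then have "C b p"
      using vacant_above_gap[of "b - 1" p] gap 0 hb by auto
    then show thesis
      using guard gap 0 by simp
  qed
  show thesis
  proof (rule that)
    show "u < T" "2 \<le> b"
      using t u gap by simp_all
    show "pattern_011 (C (b + 1)) (p + 1) (p + 3 * u + 1)"
      using pattern_011_restrict[OF row, of "p + 3 * u + 1" 0] u by simp
    show "\<not> C b (p + 3 * u + 2)" "\<not> C (b - 1) (p + 3 * u + 3)"
      using vacancies_left_of_gap[of b "p + 3 * u + 2"] vacant_end t hb u
      by (simp_all add: numeral_eq_Suc)
  qed
qed

lemma bracket_descent: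
  assumes "bracket m n C b p T" and guard: "\<not> C b p \<or> C b (p + 2)"
  obtains b' q T' where "T' < T" "bracket m n C b' q T'" "\<not> C b' (q + 3 * T' + 4)"
proof -
  have hb: "1 \<le> b" "b + 1 \<le> m" "1 \<le> p" "p + 3 * T + 3 \<le> n" "\<not> C (b + 1) (p + 1)"
    using assms unfolding bracket_def by auto
  obtain u where u: "u < T" "2 \<le> b" and row: "pattern_011 (C (b + 1)) (p + 1) (p + 3 * u + 1)"
    and left: "\<not> C b (p + 3 * u + 2)" "\<not> C (b - 1) (p + 3 * u + 3)"
    using bracket_gap_above[OF assms] .
  \<comment> \<open>The shorter bracket sits one row up and starts at a vacancy in column p or p + 3.\<close>
  obtain k where k: "k \<le> u" "\<not> C b (p + 3 * k)"
  proof (cases "C b p")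
    case True
    then have "C b (p + 2)"
      using guard by simp
    moreover from this have "u \<noteq> 0"
      using left(1) by (cases u) auto
    ultimately show thesis
      using that[of 1] occupied_diagonal_forces_vacancy[of b "p + 1"] hb u
      by (simp add: numeral_eq_Suc)
  qed (use that[of 0] in simp)
  from k(1) obtain T' where T': "u = k + T'"
    by (auto simp: le_iff_add)
  have "2 \<le> p + 3 * k"
    using vacancy_surrounded[of b "p + 3 * k"] k(2) hb u T' by simp
  define q where "q = p + 3 * k - 1"
  have q: "q + 1 = p + 3 * k" "1 \<le> q" "q + 2 = p + 1 + 3 * k" "q + 3 * T' + 2 = p + 3 * u + 1"
    "q + 3 * T' + 3 = p + 3 * u + 2" "q + 3 * T' + 4 = p + 3 * u + 3"
    using \<open>2 \<le> p + 3 * k\<close> T' unfolding q_def by simp_all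
  have b: "b - 1 + 1 = b" "b - 1 + 2 = b + 1" "1 \<le> b - 1"
    using u(2) by simp_all
  have "pattern_011 (C (b + 1)) (q + 2) (q + 3 * T' + 2)"
    unfolding q(3,4) by (rule pattern_011_restrict[OF row]) simp
  then have "bracket m n C (b - 1) q T'"
    unfolding bracket_def b q(1,5) using b(3) q(2) hb u T' k(2) left(1) by simp
  moreover have "\<not> C (b - 1) (q + 3 * T' + 4)"
    unfolding q(6) by (rule left(2))
  moreover have "T' < T"
    using T' u by simp
  ultimately show thesis
    using that by blast
qed

end

lemma no_bracket_mirror_if_no_bracket:
  assumes no_bracket:
      "\<And>C b p. \<lbrakk>ES_local m n C; bracket m n C b p T; \<not> C b p \<or> C b (p + 2)\<rbrakk> \<Longrightarrow> False"
    and "ES_local m n C" "bracket m n C b p T" "\<not> C b (p + 3 * T + 4) \<or> C b (p + 3 * T + 2)"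
  shows False
proof -
  obtain q where "bracket m n (reflect n C) b q T"
    and "reflect n C b q \<longleftrightarrow> C b (p + 3 * T + 4)"
    and "reflect n C b (q + 2) \<longleftrightarrow> C b (p + 3 * T + 2)"
    using bracket_reflect[OF assms(2,3)] .
  then show False
    using no_bracket ES_local_reflect[OF assms(2)] assms(4) by blast
qed

lemma no_bracket: "\<lbrakk>ES_local m n C; bracket m n C b p T; \<not> C b p \<or> C b (p + 2)\<rbrakk> \<Longrightarrow> False"
proof (induction T arbitrary: C b p rule: less_induct)
  case (less T)
  then obtain b' q T' where "T' < T" "bracket m n C b' q T'" "\<not> C b' (q + 3 * T' + 4)"
    using ES_local.bracket_descent by blast
  then show False
    using no_bracket_mirror_if_no_bracket[of m n T' C b' q] less.IH less.prems(1) by blast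
qed

lemma no_bracket_mirror:
  "\<lbrakk>ES_local m n C; bracket m n C b p T; \<not> C b (p + 3 * T + 4) \<or> C b (p + 3 * T + 2)\<rbrakk> \<Longrightarrow>
    False"
  using no_bracket_mirror_if_no_bracket[OF no_bracket] .

context ES_local
begin

lemma occupied_over_pattern_011_to_penultimate:
  assumes "1 \<le> b" "b + 1 \<le> m" "1 \<le> p" "n = p + 3 * K + 3"
    and row: "pattern_011 (C (b + 1)) (p + 1) (p + 3 * K + 2)"
  shows "C b p"
proof (rule ccontr)
  assume "\<not> C b p"
  have "\<not> C (b + 1) (p + 3 * K + 1)" "C (b + 1) (p + 3 * K + 2)"
    using pattern_011_vacant[OF row, of _ K] pattern_011_occupied[OF row, of _ K] by simp_all
  moreover have "C b (p + 3 * K + 1)" "C b (p + 3 * K + 3)"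
    using occupied_above_vacancy[of b "p + 3 * K + 1"] occupied_last_column[of b] assms
      \<open>\<not> C (b + 1) (p + 3 * K + 1)\<close> by (simp_all add: numeral_eq_Suc)
  ultimately have "\<not> C b (p + 3 * K + 2)"
    using vacant_below_triple[of b "p + 3 * K + 1"] assms by (auto simp: numeral_eq_Suc)
  \<comment> \<open>A house put there could only block the house above it.\<close>
  then have "2 \<le> b" "C (b - 1) (p + 3 * K + 1)"
    using vacancy_blocks_neighbour[of b "p + 3 * K + 2"] \<open>\<not> C (b + 1) (p + 3 * K + 1)\<close> assms
    by (auto simp: numeral_eq_Suc)
  have "2 \<le> p"
    using vacancy_surrounded[of b p] \<open>\<not> C b p\<close> assms by simp
  define q where "q = p - 1"
  have q: "q + 1 = p" "q + 2 = p + 1" "q + 3 * K + 2 = p + 3 * K + 1"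
    "q + 3 * K + 3 = p + 3 * K + 2" "1 \<le> q"
    using \<open>2 \<le> p\<close> unfolding q_def by simp_all
  have b: "b - 1 + 1 = b" "b - 1 + 2 = b + 1" "1 \<le> b - 1"
    using \<open>2 \<le> b\<close> by simp_all
  have "pattern_011 (C (b + 1)) (q + 2) (q + 3 * K + 2)"
    unfolding q(2,3) using pattern_011_restrict[OF row, of _ 0] by simp
  then have "bracket m n C (b - 1) q K"
    unfolding bracket_def b q(1,4) using b(3) q(5) assms \<open>\<not> C b p\<close> \<open>\<not> C b (p + 3 * K + 2)\<close>
    by simp
  moreover have "C (b - 1) (q + 3 * K + 2)"
    unfolding q(3) by fact
  ultimately show False
    using no_bracket_mirror[OF ES_local_axioms] by blast
qed

lemma no_diagonal_above_pattern_011: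
  assumes "1 \<le> b" "b + 2 \<le> m" "1 \<le> p" "p + 2 \<le> n" "\<not> C b p" "\<not> C (b + 1) (p + 1)"
    and below: "pattern_011 (C (b + 2)) (p + 2) n"
  shows False
proof -
  have no_bracket_here: "\<not> bracket m n C b p T" for T
    using no_bracket[OF ES_local_axioms] assms(5) by blast
  have bracket_if_vacant: "bracket m n C b p T"
    if "\<not> C (b + 1) (p + 3 * T + 3)" "p + 3 * T + 3 \<le> n" for T
    unfolding bracket_def using pattern_011_restrict[OF below, of "p + 3 * T + 2" 0] that assms
    by simp
  define K r where "K = (n - (p + 2)) div 3" and "r = (n - (p + 2)) mod 3"
  then have n: "n = p + 2 + 3 * K + r" and "r < 3"
    using assms(4) by simp_all
  then consider "r = 0" | "r = 1" | "r = 2" by linarith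
  then show False
  proof cases
    case 1
    then show False
      using pattern_011_vacant[OF below, of n K] occupied_last_column[of "b + 2"] n assms by simp
  next
    case 2
    have "pattern_011 (C (b + 1)) (p + 1) (p + 3 * K + 2)"
      if "\<forall>t<K. C (b + 1) (p + 3 * t + 3)"
      using pattern_011_restrict[OF below, of "p + 3 * K + 2" 0] that n 2 assms
      by (intro pattern_011_propagates_up) auto
    then show False
      using occupied_over_pattern_011_to_penultimate[of b p K] bracket_if_vacant no_bracket_here
        n 2 assms by fastforce
  next
    case 3
    have "C (b + 1) (p + 3 * K + 2)"
      using occupied_above_vacancy[of "b + 1" "p + 3 * K + 2"]
        pattern_011_vacant[OF below, of "p + 3 * K + 2" K] n 3 assms by simp
    moreover have "C (b + 1) (p + 3 * K + 4)" "C (b + 2) (p + 3 * K + 3)"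
      using occupied_last_column[of "b + 1"] pattern_011_occupied[OF below, of "p + 3 * K + 3" K]
        n 3 assms by (simp_all add: numeral_eq_Suc)
    ultimately have "\<not> C (b + 1) (p + 3 * K + 3)"
      using vacant_below_triple[of "b + 1" "p + 3 * K + 2"] n 3 assms by (auto simp: numeral_eq_Suc)
    then show False
      using bracket_if_vacant[of K] no_bracket_here[of K] n 3 by simp
  qed
qed

lemma occupied_after_pattern_011_below_diagonal:
  assumes "1 \<le> b" "b + 2 \<le> m" "1 \<le> p" "p + 3 * k + 4 \<le> n" "\<not> C b p" "\<not> C (b + 1) (p + 1)"
    and row: "pattern_011 (C (b + 2)) (p + 2) (p + 3 * k + 2)"
  shows "C (b + 2) (p + 3 * k + 4)"
proof (rule ccontr)
  assume "\<not> C (b + 2) (p + 3 * k + 4)"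
  moreover have "\<not> C (b + 2) (p + 3 * k + 2)"
    using pattern_011_vacant[OF row, of _ k] by simp
  ultimately have "\<not> C (b + 1) (p + 3 * k + 3)"
    using vacant_above_gap[of "b + 1" "p + 3 * k + 2"] assms by (simp add: numeral_eq_Suc)
  then have "bracket m n C b p k"
    unfolding bracket_def using row assms by simp
  then show False
    using no_bracket[OF ES_local_axioms] assms(5) by blast
qed

lemma pattern_011_below_diagonal_snoc:
  assumes "1 \<le> b" "b + 3 \<le> m" "1 \<le> p" "\<not> C b p" "\<not> C (b + 1) (p + 1)"
    and full: "\<And>x. \<lbrakk>p + 2 \<le> x; x \<le> n\<rbrakk> \<Longrightarrow> C (b + 3) x"
    and row: "pattern_011 (C (b + 2)) (p + 2) (p + 2 + d)" and "p + 2 + d + 1 \<le> n"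
  shows "pattern_011 (C (b + 2)) (p + 2) (p + 2 + d + 1)"
proof -
  have "\<exists>k. d = 3 * k \<or> d = 3 * k + 1 \<or> d = 3 * k + 2"
    by presburger
  then obtain k where "d = 3 * k \<or> d = 3 * k + 1 \<or> d = 3 * k + 2"
    by blast
  then have "C (b + 2) (p + 2 + d + 1) \<longleftrightarrow> (d + 1) mod 3 \<noteq> 0"
  proof (elim disjE)
    assume d: "d = 3 * k"
    have "\<not> C (b + 2) (p + 2 + d)"
      using pattern_011_vacant[OF row, of _ k] d by simp
    then show ?thesis
      using vacancy_surrounded[of "b + 2" "p + 2 + d"] d assms by simp
  next
    assume d: "d = 3 * k + 1"
    have "C (b + 2) (p + 3 * k + 4)"
      using occupied_after_pattern_011_below_diagonal[of b p k] pattern_011_restrict[OF row, of _ 0]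
        d assms by simp
    moreover have "p + 2 + d + 1 = p + 3 * k + 4" "(d + 1) mod 3 = 2"
      using d by (simp_all add: mod_Suc)
    ultimately show ?thesis
      by (simp only:) simp
  next
    assume d: "d = 3 * k + 2"
    have "C (b + 2) (p + 3 * k + 3)" "C (b + 2) (p + 3 * k + 4)" "C (b + 3) (p + 3 * k + 4)"
      using pattern_011_occupied[OF row, of _ k] full d assms by simp_all
    then have "\<not> C (b + 2) (p + 3 * k + 5)"
      using vacant_below_triple[of "b + 2" "p + 3 * k + 3"] d assms by (auto simp: numeral_eq_Suc)
    moreover have "p + 2 + d + 1 = p + 3 * k + 5" "(d + 1) mod 3 = 0"
      using d by simp_all
    ultimately show ?thesis
      by (simp only:) simp
  qed
  then show ?thesis
    using pattern_011_snoc[OF row] by simp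
qed

lemma pattern_011_below_diagonal:
  assumes "1 \<le> b" "b + 3 \<le> m" "1 \<le> p" "p + 2 \<le> n"
    and vacant: "\<not> C b p" "\<not> C (b + 1) (p + 1)" "\<not> C (b + 2) (p + 2)"
    and full: "\<And>x. \<lbrakk>p + 2 \<le> x; x \<le> n\<rbrakk> \<Longrightarrow> C (b + 3) x"
  shows "pattern_011 (C (b + 2)) (p + 2) n"
proof -
  have "pattern_011 (C (b + 2)) (p + 2) (p + 2 + d)" if "p + 2 + d \<le> n" for d
    using that
  proof (induction d)
    case 0
    then show ?case
      using vacant(3) by (simp add: pattern_011_def)
  next
    case (Suc d)
    then show ?case
      using pattern_011_below_diagonal_snoc[of b p d] assms by simp
  qed
  moreover have "p + 2 + (n - (p + 2)) = n"
    using assms(4) by simp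
  ultimately show ?thesis
    by (metis order_refl)
qed

lemma not_typeIV: "\<not> typeIV m n C i j"
proof
  assume "typeIV m n C i j"
  then have "2 \<le> i" "i + 1 \<le> m" "2 \<le> j" "j + 1 \<le> n" "\<not> C (i - 1) (j - 1)" "\<not> C i j"
    "pattern_011 (C (i + 1)) (j + 1) n"
    unfolding typeIV_def pattern_011_def by auto
  moreover define b p where "b = i - 1" and "p = j - 1"
  ultimately have "1 \<le> b" "b + 2 \<le> m" "1 \<le> p" "p + 2 \<le> n" "\<not> C b p" "\<not> C (b + 1) (p + 1)"
    "pattern_011 (C (b + 2)) (p + 2) n"
    by (simp_all add: numeral_eq_Suc)
  then show False
    by (rule no_diagonal_above_pattern_011)
qed

lemma not_typeIII: "\<not> typeIII m n C i j"
proof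
  assume "typeIII m n C i j"
  then have "2 \<le> i" "i + 2 \<le> m" "2 \<le> j" "j + 1 \<le> n" "\<not> C (i - 1) (j - 1)" "\<not> C i j"
    "\<not> C (i + 1) (j + 1)" "\<And>x. \<lbrakk>j + 1 \<le> x; x \<le> n\<rbrakk> \<Longrightarrow> C (i + 2) x"
    unfolding typeIII_def by auto
  moreover define b p where "b = i - 1" and "p = j - 1"
  ultimately have shifted: "1 \<le> b" "b + 3 \<le> m" "1 \<le> p" "p + 2 \<le> n" "\<not> C b p"
    "\<not> C (b + 1) (p + 1)" "\<not> C (b + 2) (p + 2)" "\<And>x. \<lbrakk>p + 2 \<le> x; x \<le> n\<rbrakk> \<Longrightarrow> C (b + 3) x"
    by (simp_all add: numeral_eq_Suc)
  then have "pattern_011 (C (b + 2)) (p + 2) n"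
    by (rule pattern_011_below_diagonal)
  then show False
    using no_diagonal_above_pattern_011[of b p] shifted by simp
qed

end

theorem mainTheorem10:
  fixes m n :: nat and C :: "nat \<Rightarrow> nat \<Rightarrow> bool"
  assumes "ES m n C"
  shows "\<not> (\<exists>i j. typeIII m n C i j \<or> typeIV m n C i j \<or>
                  typeIII m n (reflect n C) i j \<or> typeIV m n (reflect n C) i j)"
proof -
  have "ES_local m n C"
    using assms by (rule ES_imp_ES_local)
  moreover have "ES_local m n (reflect n C)"
    using calculation by (rule ES_local_reflect)
  ultimately show ?thesis
    using ES_local.not_typeIII ES_local.not_typeIV by blast
qed

end
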